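(* Let $\mathcal{B}$ be an operator algebra. Suppose that $\tau\colon\mathcal{B}\to \mathbf{B}(\widetilde{\mathcal{H}})$ is $\Phi$-maximal (respectively $\Phi_r$-maximal), that the homomorphism $\rho\colon\mathcal{B}\to \mathbf{B}(\mathcal{H})$ lies in $\Phi(\mathcal{B})$ (respectively in $\Phi_r(\mathcal{B})$), and that $\tau$ dilates $\rho$, i.e. $\mathcal{H}\subseteq \widetilde{\mathcal{H}}$ and $\rho(b) = P_{\mathcal{H}}\tau(b)|_{\mathcal{H}}$ for all $b\in \mathcal{B}$, where $P_{\mathcal{H}}$ is the orthogonal projection onto $\mathcal{H}$. Then $\tau(\mathcal{B}_\rho)$ leaves $\mathcal{H}$ invariant.
   Context: For a linear map $\phi$ between operator algebras, $\|\phi\|_{cb}=\sup_n\|\mathrm{id}_{M_n}\otimes\phi\|$. $\Phi(\mathcal{B})$ is the set of injective homomorphisms $\phi$ from $\mathcal{B}$ onto an operator algebra $\mathcal{C}\subseteq\mathbf{B}(\mathcal{K})$ (some Hilbert space $\mathcal{K}$) with $\|\phi\|_{cb}<\infty$ and $\|\phi^{-1}\|_{cb}<\infty$; $\Phi_r(\mathcal{B})$ is the subset with $\|\phi\|_{cb}\le r$ and $\|\phi^{-1}\|_{cb}\le r$. For such $\phi$ with image $\mathcal{C}$, $\mathcal{B}_\phi=\phi^{-1}(\mathcal{C}\cap\mathcal{C}^* )$, $\mathcal{C}^*$ being the set of adjoints. A map $\tau\in\Phi(\mathcal{B})$ (resp. $\tau\in\Phi_r(\mathcal{B})$) is $\Phi$-maximal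 (resp. $\Phi_r$-maximal) if $\mathcal{B}_\tau$ is maximal with respect to inclusion in the family $\{\mathcal{B}_\chi:\chi\in\Phi(\mathcal{B})\}$ (resp. $\{\mathcal{B}_\chi:\chi\in\Phi_r(\mathcal{B})\}$). *)

theory Defs
  imports "HOL-Analysis.Analysis"
begin

class complex_vector = real_vector +
  fixes scaleC :: "complex \<Rightarrow> 'a \<Rightarrow> 'a"
  assumes scaleC_add_right: "scaleC a (x + y) = scaleC a x + scaleC a y"
    and scaleC_add_left: "scaleC (a + b) x = scaleC a x + scaleC b x"
    and scaleC_scaleC: "scaleC a (scaleC b x) = scaleC (a * b) x"
    and scaleC_one: "scaleC 1 x = x"
    and scaleR_scaleC: "scaleR r x = scaleC (complex_of_real r) x"

text \<open>Complex inner product (linear in the second argument); the real inner product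
  (hence norm, metric and topology) is its real part.\<close>
class complex_inner = complex_vector + real_inner +
  fixes cinner :: "'a \<Rightarrow> 'a \<Rightarrow> complex"
  assumes cinner_cnj_commute: "cinner x y = cnj (cinner y x)"
    and cinner_add_right: "cinner x (y + z) = cinner x y + cinner x z"
    and cinner_scaleC_right: "cinner x (scaleC a y) = a * cinner x y"
    and inner_eq_Re_cinner: "inner x y = Re (cinner x y)"

class chilbert = complex_inner + complete_space

text \<open>Hilbert spaces are modelled as closed complex subspaces of an ambient Hilbert space type.\<close>
definition csubspace :: "'a::complex_vector set \<Rightarrow> bool" where
  "csubspace S \<longleftrightarrow> 0 \<in> S \<and> (\<forall>x\<in>S. \<forall>y\<in>S. x + y \<in> S) \<and> (\<forall>c. \<forall>x\<in>S. scaleC c x \<in> S)"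

definition hilbert_subspace :: "'a::chilbert set \<Rightarrow> bool" where
  "hilbert_subspace S \<longleftrightarrow> csubspace S \<and> closed S"

definition proj :: "'a::chilbert set \<Rightarrow> 'a \<Rightarrow> 'a" where
  "proj H x = (THE y. y \<in> H \<and> (\<forall>z\<in>H. cinner z (x - y) = 0))"

text \<open>\<open>bop H\<close> = B(H): bounded complex-linear operators on H, represented as functions
  on the ambient type that vanish outside H (so that operator equality is function equality).\<close>
definition bop :: "'a::chilbert set \<Rightarrow> ('a \<Rightarrow> 'a) set" where
  "bop H = {T. (\<forall>x\<in>H. T x \<in> H) \<and> (\<forall>x\<in>H. \<forall>y\<in>H. T (x + y) = T x + T y)
     \<and> (\<forall>c. \<forall>x\<in>H. T (scaleC c x) = scaleC c (T x))
     \<and> (\<exists>M. \<forall>x\<in>H. norm (T x) \<le> M * norm x) \<and> (\<forall>x. x \<notin> H \<longrightarrow> T x = 0)}"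

definition opnorm :: "'a::chilbert set \<Rightarrow> ('a \<Rightarrow> 'a) \<Rightarrow> real" where
  "opnorm H T = Sup ((\<lambda>x. norm (T x)) ` {x \<in> H. norm x \<le> 1})"

definition is_adjoint :: "'a::chilbert set \<Rightarrow> ('a \<Rightarrow> 'a) \<Rightarrow> ('a \<Rightarrow> 'a) \<Rightarrow> bool" where
  "is_adjoint H T S \<longleftrightarrow> S \<in> bop H \<and> (\<forall>x\<in>H. \<forall>y\<in>H. cinner (T x) y = cinner x (S y))"

definition adjoints :: "'a::chilbert set \<Rightarrow> ('a \<Rightarrow> 'a) set \<Rightarrow> ('a \<Rightarrow> 'a) set" where
  "adjoints H C = {S. \<exists>T\<in>C. is_adjoint H T S}"

definition op_algebra :: "'a::chilbert set \<Rightarrow> ('a \<Rightarrow> 'a) set \<Rightarrow> bool" where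
  "op_algebra H A \<longleftrightarrow> hilbert_subspace H \<and> A \<subseteq> bop H \<and> (\<lambda>x. 0) \<in> A
     \<and> (\<forall>S\<in>A. \<forall>T\<in>A. (\<lambda>x. S x + T x) \<in> A)
     \<and> (\<forall>c. \<forall>T\<in>A. (\<lambda>x. scaleC c (T x)) \<in> A)
     \<and> (\<forall>S\<in>A. \<forall>T\<in>A. S \<circ> T \<in> A)
     \<and> (\<forall>T\<in>bop H. (\<forall>e>0. \<exists>S\<in>A. opnorm H (\<lambda>x. T x - S x) < e) \<longrightarrow> T \<in> A)"

text \<open>Norm of an n x n operator matrix T = [T i j] (i,j < n) as an operator on H^n.\<close>
definition mnorm :: "'a::chilbert set \<Rightarrow> nat \<Rightarrow> (nat \<Rightarrow> nat \<Rightarrow> 'a \<Rightarrow> 'a) \<Rightarrow> real" where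
  "mnorm H n T = Sup ((\<lambda>x. sqrt (\<Sum>i<n. (norm (\<Sum>j<n. T i j (x j)))\<^sup>2))
     ` {x. (\<forall>j<n. x j \<in> H) \<and> (\<Sum>j<n. (norm (x j))\<^sup>2) \<le> 1})"

definition mats :: "nat \<Rightarrow> 'b set \<Rightarrow> (nat \<Rightarrow> nat \<Rightarrow> 'b) set" where
  "mats n A = {b. \<forall>i<n. \<forall>j<n. b i j \<in> A}"

text \<open>Completely bounded norm of f : A \<subseteq> B(H) \<rightarrow> B(K):
  sup over n of the norm of id_{M_n} \<otimes> f (possibly infinite).\<close>
definition cbnorm :: "'a::chilbert set \<Rightarrow> ('a \<Rightarrow> 'a) set \<Rightarrow> 'k::chilbert set
    \<Rightarrow> (('a \<Rightarrow> 'a) \<Rightarrow> ('k \<Rightarrow> 'k)) \<Rightarrow> ereal" where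
  "cbnorm H A K f = (SUP n. SUP b \<in> {b \<in> mats n A. mnorm H n b \<le> 1}.
      ereal (mnorm K n (\<lambda>i j. f (b i j))))"

definition hom_on :: "('a::chilbert \<Rightarrow> 'a) set \<Rightarrow> 'k::chilbert set
    \<Rightarrow> (('a \<Rightarrow> 'a) \<Rightarrow> ('k \<Rightarrow> 'k)) \<Rightarrow> bool" where
  "hom_on A K f \<longleftrightarrow> (\<forall>a\<in>A. f a \<in> bop K)
     \<and> (\<forall>a\<in>A. \<forall>b\<in>A. f (\<lambda>x. a x + b x) = (\<lambda>y. f a y + f b y))
     \<and> (\<forall>c. \<forall>a\<in>A. f (\<lambda>x. scaleC c (a x)) = (\<lambda>y. scaleC c (f a y)))
     \<and> (\<forall>a\<in>A. \<forall>b\<in>A. f (a \<circ> b) = f a \<circ> f b)"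

text \<open>\<Phi>(B): pairs (K, \<phi>) with \<phi> an injective homomorphism of B onto an operator algebra
  C \<subseteq> B(K), K a Hilbert space (closed subspace of the ambient type 'k), with
  \<parallel>\<phi>\<parallel>_cb < \<infinity> and \<parallel>\<phi>^{-1}\<parallel>_cb < \<infinity>.\<close>
definition Phi :: "'a::chilbert set \<Rightarrow> ('a \<Rightarrow> 'a) set
    \<Rightarrow> ('k::chilbert set \<times> (('a \<Rightarrow> 'a) \<Rightarrow> ('k \<Rightarrow> 'k))) set" where
  "Phi H0 B = {(K, \<phi>). hilbert_subspace K \<and> hom_on B K \<phi> \<and> inj_on \<phi> B
      \<and> op_algebra K (\<phi> ` B)
      \<and> cbnorm H0 B K \<phi> < \<infinity> \<and> cbnorm K (\<phi> ` B) H0 (inv_into B \<phi>) < \<infinity>}"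

definition Phi_r :: "real \<Rightarrow> 'a::chilbert set \<Rightarrow> ('a \<Rightarrow> 'a) set
    \<Rightarrow> ('k::chilbert set \<times> (('a \<Rightarrow> 'a) \<Rightarrow> ('k \<Rightarrow> 'k))) set" where
  "Phi_r r H0 B = {(K, \<phi>) \<in> Phi H0 B. cbnorm H0 B K \<phi> \<le> ereal r
      \<and> cbnorm K (\<phi> ` B) H0 (inv_into B \<phi>) \<le> ereal r}"

text \<open>B_\<phi> = \<phi>^{-1}(C \<inter> C^*) where C = \<phi>(B) \<subseteq> B(K).\<close>
definition Bphi :: "('a::chilbert \<Rightarrow> 'a) set \<Rightarrow> 'k::chilbert set
    \<Rightarrow> (('a \<Rightarrow> 'a) \<Rightarrow> ('k \<Rightarrow> 'k)) \<Rightarrow> ('a \<Rightarrow> 'a) set" where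
  "Bphi B K \<phi> = {b \<in> B. \<phi> b \<in> \<phi> ` B \<inter> adjoints K (\<phi> ` B)}"

definition maximal_in :: "('k::chilbert set \<times> (('a::chilbert \<Rightarrow> 'a) \<Rightarrow> ('k \<Rightarrow> 'k))) set
    \<Rightarrow> ('a \<Rightarrow> 'a) set \<Rightarrow> 'k set \<Rightarrow> (('a \<Rightarrow> 'a) \<Rightarrow> ('k \<Rightarrow> 'k)) \<Rightarrow> bool" where
  "maximal_in F B K \<tau> \<longleftrightarrow> (K, \<tau>) \<in> F \<and> (\<forall>K' \<kappa>. (K', \<kappa>) \<in> F \<longrightarrow> \<not> (Bphi B K \<tau> \<subset> Bphi B K' \<kappa>))"

definition dilates :: "('a::chilbert \<Rightarrow> 'a) set \<Rightarrow> 'k::chilbert set \<Rightarrow> (('a \<Rightarrow> 'a) \<Rightarrow> ('k \<Rightarrow> 'k))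
    \<Rightarrow> 'k set \<Rightarrow> (('a \<Rightarrow> 'a) \<Rightarrow> ('k \<Rightarrow> 'k)) \<Rightarrow> bool" where
  "dilates B Ht \<tau> H \<rho> \<longleftrightarrow> H \<subseteq> Ht
     \<and> (\<forall>b\<in>B. \<rho> b = (\<lambda>x. if x \<in> H then proj H (\<tau> b x) else 0))"

end

theory Submission
  imports Defs
begin

text \<open>Compressing \<open>\<tau>\<close> to \<open>H\<close> maps adjoint pairs to adjoint pairs, so
  \<open>\<B>\<^sub>\<tau> \<subseteq> \<B>\<^sub>\<rho>\<close>, and maximality of \<open>\<tau>\<close> forces equality. For \<open>b \<in> \<B>\<^sub>\<rho>\<close> pick \<open>c\<close>
  with \<open>\<tau>(c) = \<tau>(b)\<^sup>*\<close>. Multiplicativity of \<open>\<rho>\<close> gives \<open>P \<tau>(c) \<tau>(b) x = P \<tau>(c) P \<tau>(b) x\<close> for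
  \<open>x \<in> H\<close>; pairing with \<open>x\<close> yields \<open>\<parallel>\<tau>(b) x\<parallel>\<^sup>2 = \<langle>P \<tau>(b) x, \<tau>(b) x\<rangle> = \<parallel>P \<tau>(b) x\<parallel>\<^sup>2\<close>, hence
  \<open>\<tau>(b) x = P \<tau>(b) x \<in> H\<close>. The orthogonal projection itself has to be constructed:
  the nearest point of a closed subspace exists by completeness and the parallelogram law.\<close>

lemma dist_midpoint_parallelogram:
  fixes a b z :: "'a::real_inner"
  shows "(dist a b)\<^sup>2 = 2 * (dist z a)\<^sup>2 + 2 * (dist z b)\<^sup>2 - 4 * (dist z (midpoint a b))\<^sup>2"
  by (simp add: dist_norm midpoint_def power2_norm_eq_inner inner_simps inner_commute algebra_simps)

lemma closed_convex_nearest_point_exists: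
  fixes S :: "'a::{real_inner,complete_space} set"
  assumes "closed S" "convex S" "S \<noteq> {}"
  obtains y where "y \<in> S" "\<And>w. w \<in> S \<Longrightarrow> dist z y \<le> dist z w"
proof -
  define d where "d = infdist z S"
  have d_le: "d \<le> dist z w" if "w \<in> S" for w
    using infdist_le[OF that] by (simp add: d_def)
  have "\<exists>y\<in>S. (dist z y)\<^sup>2 < d\<^sup>2 + 1 / Suc n" for n
  proof -
    have "Inf (dist z ` S) < sqrt (d\<^sup>2 + 1 / Suc n)"
      using real_less_rsqrt[of d] infdist_notempty[OF assms(3)] by (simp add: d_def)
    then obtain y where "y \<in> S" "dist z y < sqrt (d\<^sup>2 + 1 / Suc n)"
      using cInf_lessD[of "dist z ` S"] assms(3) by blast
    then show ?thesis
      by (metis real_sqrt_abs real_sqrt_less_iff abs_of_nonneg zero_le_dist)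
  qed
  then obtain Y where Y: "\<And>n. Y n \<in> S" "\<And>n. (dist z (Y n))\<^sup>2 < d\<^sup>2 + 1 / Suc n"
    by metis
  have bound: "(dist (Y m) (Y n))\<^sup>2 \<le> 2 / Suc m + 2 / Suc n" for m n
  proof -
    have "midpoint (Y m) (Y n) \<in> S"
      using closed_segment_subset[OF Y(1) Y(1) assms(2)] midpoint_in_closed_segment by blast
    then have "d\<^sup>2 \<le> (dist z (midpoint (Y m) (Y n)))\<^sup>2"
      using d_le infdist_nonneg unfolding d_def by (blast intro: power_mono)
    then show ?thesis
      using dist_midpoint_parallelogram[of "Y m" "Y n" z] Y(2)[of m] Y(2)[of n] by linarith
  qed
  have "Cauchy Y"
  proof (rule metric_CauchyI)
    fix e :: real assume "e > 0"
    obtain M where M: "4 / e\<^sup>2 < real M" using reals_Archimedean2 by blast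
    have "dist (Y m) (Y n) < e" if "M \<le> m" "M \<le> n" for m n
    proof -
      have small: "2 / Suc k < e\<^sup>2 / 2" if "M \<le> k" for k
      proof -
        have "4 < real M * e\<^sup>2"
          using M \<open>e > 0\<close> by (simp add: field_simps)
        also have "\<dots> \<le> real (Suc k) * e\<^sup>2"
          using that by (intro mult_right_mono) auto
        finally show ?thesis by (simp add: field_simps)
      qed
      have "(dist (Y m) (Y n))\<^sup>2 < e\<^sup>2"
        using bound[of m n] small[of m] small[of n] that by linarith
      then show ?thesis
        using \<open>e > 0\<close> by (simp add: power_less_imp_less_base)
    qed
    then show "\<exists>M. \<forall>m\<ge>M. \<forall>n\<ge>M. dist (Y m) (Y n) < e" by blast
  qed
  then obtain y where lim: "Y \<longlonglongrightarrow> y"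
    using Cauchy_convergent_iff convergent_def by blast
  have "y \<in> S"
    using closed_sequentially[OF assms(1)] Y(1) lim by blast
  have "(\<lambda>n. (dist z (Y n))\<^sup>2) \<longlonglongrightarrow> (dist z y)\<^sup>2"
    by (intro tendsto_intros lim)
  moreover have "(\<lambda>n. d\<^sup>2 + 1 / Suc n) \<longlonglongrightarrow> d\<^sup>2"
    using tendsto_add[OF tendsto_const LIMSEQ_Suc[OF lim_inverse_n']] by simp
  ultimately have "(dist z y)\<^sup>2 \<le> d\<^sup>2"
    by (rule LIMSEQ_le) (use Y(2) less_imp_le in blast)
  then have "dist z y \<le> d"
    using infdist_nonneg d_def by (blast intro: power2_le_imp_le)
  then show ?thesis
    using that \<open>y \<in> S\<close> d_le order_trans by blast
qed

lemma nearest_point_orthogonal: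
  fixes S :: "'a::real_inner set"
  assumes "subspace S" "y \<in> S" "\<And>w. w \<in> S \<Longrightarrow> dist z y \<le> dist z w" "w \<in> S"
  shows "inner w (z - y) = 0"
proof (cases "w = 0")
  case False
  define a where "a = inner w (z - y)"
  define N where "N = (norm w)\<^sup>2"
  have "N > 0" using False by (simp add: N_def)
  have "y + (a / N) *\<^sub>R w \<in> S"
    using assms by (simp add: subspace_add subspace_scale)
  then have "(norm (z - y))\<^sup>2 \<le> (norm ((z - y) - (a / N) *\<^sub>R w))\<^sup>2"
    using assms(3) by (simp add: dist_norm power_mono algebra_simps)
  also have "\<dots> = (norm (z - y))\<^sup>2 - a\<^sup>2 / N"
    using \<open>N > 0\<close> unfolding a_def N_def power2_norm_eq_inner
    by (simp add: inner_simps inner_commute field_simps power2_eq_square)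
  finally have "a\<^sup>2 / N \<le> 0" by simp
  then show ?thesis
    using \<open>N > 0\<close> by (simp add: a_def divide_le_0_iff)
qed simp

lemma cinner_diff_right: "cinner (x::'a::complex_inner) (a - b) = cinner x a - cinner x b"
  by (metis add_diff_cancel cinner_add_right diff_add_cancel)

lemma cinner_scaleC_left: "cinner (scaleC c x) (y::'a::complex_inner) = cnj c * cinner x y"
  by (metis cinner_cnj_commute cinner_scaleC_right complex_cnj_mult complex_cnj_cnj)

lemma csubspace_imp_subspace: "csubspace S \<Longrightarrow> subspace S"
  by (simp add: csubspace_def subspace_def scaleR_scaleC)

lemma cinner_eq_0_if_inner_eq_0:
  assumes "csubspace H" "\<And>w. w \<in> H \<Longrightarrow> inner w v = 0" "w \<in> H"
  shows "cinner w v = 0"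
proof -
  have "scaleC \<i> w \<in> H"
    using assms(1,3) by (simp add: csubspace_def)
  then have "Re (cinner (scaleC \<i> w) v) = 0"
    using assms(2) by (simp add: inner_eq_Re_cinner)
  then have "Im (cinner w v) = 0"
    by (simp add: cinner_scaleC_left)
  moreover have "Re (cinner w v) = 0"
    using assms(2,3) by (simp add: inner_eq_Re_cinner)
  ultimately show ?thesis by (simp add: complex_eq_iff)
qed

lemma proj_in_orthogonal:
  assumes "hilbert_subspace H"
  shows "proj H z \<in> H \<and> (\<forall>w\<in>H. cinner w (z - proj H z) = 0)"
proof -
  have H: "csubspace H" "closed H" "subspace H"
    using assms csubspace_imp_subspace by (auto simp: hilbert_subspace_def)
  then have "H \<noteq> {}"
    by (auto simp: csubspace_def)
  then obtain y where "y \<in> H" "\<And>w. w \<in> H \<Longrightarrow> dist z y \<le> dist z w"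
    using closed_convex_nearest_point_exists[OF H(2) subspace_imp_convex[OF H(3)]] by blast
  then have y: "y \<in> H \<and> (\<forall>w\<in>H. cinner w (z - y) = 0)"
    using nearest_point_orthogonal[OF H(3)] cinner_eq_0_if_inner_eq_0[OF H(1)] by blast
  have unique: "y' = y" if y': "y' \<in> H \<and> (\<forall>w\<in>H. cinner w (z - y') = 0)" for y'
  proof -
    have "y' - y \<in> H"
      using subspace_diff[OF H(3)] y y' by blast
    have "cinner (y' - y) (y' - y) = cinner (y' - y) ((z - y) - (z - y'))"
      by simp
    also have "\<dots> = 0"
      using y y' \<open>y' - y \<in> H\<close> by (simp only: cinner_diff_right) simp
    finally have "cinner (y' - y) (y' - y) = 0" .
    then show ?thesis
      using inner_eq_Re_cinner[of "y' - y" "y' - y"] by simp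
  qed
  show ?thesis
    unfolding proj_def by (rule theI[where a = y]) (use y unique in blast)+
qed

lemma cinner_proj_left: "hilbert_subspace H \<Longrightarrow> x \<in> H \<Longrightarrow> cinner x (proj H z) = cinner x z"
  using proj_in_orthogonal[of H z] by (simp add: cinner_diff_right)

lemma cinner_proj_right: "hilbert_subspace H \<Longrightarrow> x \<in> H \<Longrightarrow> cinner (proj H z) x = cinner z x"
  using cinner_proj_left by (metis cinner_cnj_commute)

lemma in_subspace_if_cinner_proj_eq:
  assumes "hilbert_subspace H" "cinner (proj H v) v = cinner v v"
  shows "v \<in> H"
proof -
  define p where "p = proj H v"
  have "p \<in> H" "cinner p (v - p) = 0"
    using proj_in_orthogonal[OF assms(1), of v] by (auto simp: p_def)
  then have "cinner p v = cinner p p"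
    by (simp add: cinner_diff_right)
  have "inner (v - p) (v - p) = inner v v - 2 * inner p v + inner p p"
    by (simp add: inner_diff_left inner_diff_right inner_commute)
  also have "\<dots> = 0"
    using assms(2) \<open>cinner p v = cinner p p\<close> by (simp add: p_def inner_eq_Re_cinner)
  finally have "inner (v - p) (v - p) = 0" .
  then show ?thesis
    using \<open>p \<in> H\<close> by simp
qed

lemma Bphi_subset_if_dilates:
  assumes "dilates B Ht \<tau> H \<rho>" "hom_on B H \<rho>" "hilbert_subspace H"
  shows "Bphi B Ht \<tau> \<subseteq> Bphi B H \<rho>"
proof
  fix b assume "b \<in> Bphi B Ht \<tau>"
  then obtain c where b: "b \<in> B" and c: "c \<in> B" and adj: "is_adjoint Ht (\<tau> c) (\<tau> b)"
    by (auto simp: Bphi_def adjoints_def)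
  have "H \<subseteq> Ht" and \<rho>: "\<And>a. a \<in> B \<Longrightarrow> \<rho> a = (\<lambda>x. if x \<in> H then proj H (\<tau> a x) else 0)"
    using assms(1) by (auto simp: dilates_def)
  have "is_adjoint H (\<rho> c) (\<rho> b)"
    unfolding is_adjoint_def
  proof (intro conjI ballI)
    show "\<rho> b \<in> bop H"
      using assms(2) b by (simp add: hom_on_def)
    fix x y assume "x \<in> H" "y \<in> H"
    have "cinner (\<rho> c x) y = cinner (\<tau> c x) y"
      using \<rho>[OF c] \<open>x \<in> H\<close> cinner_proj_right[OF assms(3) \<open>y \<in> H\<close>] by simp
    also have "\<dots> = cinner x (\<tau> b y)"
      using adj \<open>x \<in> H\<close> \<open>y \<in> H\<close> \<open>H \<subseteq> Ht\<close> by (auto simp: is_adjoint_def)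
    also have "\<dots> = cinner x (\<rho> b y)"
      using \<rho>[OF b] \<open>y \<in> H\<close> cinner_proj_left[OF assms(3) \<open>x \<in> H\<close>] by simp
    finally show "cinner (\<rho> c x) y = cinner x (\<rho> b y)" .
  qed
  then show "b \<in> Bphi B H \<rho>"
    using b c by (auto simp: Bphi_def adjoints_def)
qed

lemma dilates_invariant_if_in_Bphi:
  assumes "op_algebra H0 B" "dilates B Ht \<tau> H \<rho>" "hom_on B Ht \<tau>" "hom_on B H \<rho>"
    "hilbert_subspace H" "b \<in> Bphi B Ht \<tau>" "x \<in> H"
  shows "\<tau> b x \<in> H"
proof -
  obtain c where b: "b \<in> B" and c: "c \<in> B" and adj: "is_adjoint Ht (\<tau> c) (\<tau> b)"
    using assms(6) by (auto simp: Bphi_def adjoints_def)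
  have "H \<subseteq> Ht" and \<rho>: "\<And>a. a \<in> B \<Longrightarrow> \<rho> a = (\<lambda>x. if x \<in> H then proj H (\<tau> a x) else 0)"
    using assms(2) by (auto simp: dilates_def)
  define v where "v = \<tau> b x"
  define p where "p = proj H v"
  have "p \<in> H"
    using proj_in_orthogonal[OF assms(5)] by (simp add: p_def)
  have "v \<in> Ht"
    using assms(3,7) b \<open>H \<subseteq> Ht\<close> by (auto simp: v_def hom_on_def bop_def)
  have "c \<circ> b \<in> B" "\<tau> (c \<circ> b) = \<tau> c \<circ> \<tau> b" "\<rho> (c \<circ> b) = \<rho> c \<circ> \<rho> b"
    using assms(1,3,4) b c by (auto simp: op_algebra_def hom_on_def)
  then have "\<rho> (c \<circ> b) x = \<rho> c (\<rho> b x)"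
    by simp
  then have "proj H (\<tau> c v) = proj H (\<tau> c p)"
    using \<rho>[OF \<open>c \<circ> b \<in> B\<close>] \<rho>[OF c] \<rho>[OF b] assms(7) \<open>p \<in> H\<close> \<open>\<tau> (c \<circ> b) = \<tau> c \<circ> \<tau> b\<close>
    by (simp add: v_def p_def)
  moreover have "cinner x (proj H (\<tau> c u)) = cnj (cinner u v)" if "u \<in> Ht" for u
  proof -
    have "cinner x (proj H (\<tau> c u)) = cnj (cinner (\<tau> c u) x)"
      using cinner_proj_left[OF assms(5,7)] cinner_cnj_commute by metis
    also have "\<dots> = cnj (cinner u v)"
      using adj that assms(7) \<open>H \<subseteq> Ht\<close> by (auto simp: is_adjoint_def v_def)
    finally show ?thesis .
  qed
  ultimately have "cnj (cinner v v) = cnj (cinner p v)"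
    using \<open>v \<in> Ht\<close> \<open>p \<in> H\<close> \<open>H \<subseteq> Ht\<close> by (metis subsetD)
  then have "cinner p v = cinner v v"
    by simp
  then show ?thesis
    using in_subspace_if_cinner_proj_eq[OF assms(5)] by (simp add: v_def p_def)
qed

lemma maximal_in_dilates_invariant:
  assumes "op_algebra H0 B" "dilates B Ht \<tau> H \<rho>" "F \<subseteq> Phi H0 B"
    "maximal_in F B Ht \<tau>" "(H, \<rho>) \<in> F" "b \<in> Bphi B H \<rho>" "x \<in> H"
  shows "\<tau> b x \<in> H"
proof -
  have "(Ht, \<tau>) \<in> Phi H0 B" "(H, \<rho>) \<in> Phi H0 B"
    using assms(3-5) by (auto simp: maximal_in_def)
  then have hom: "hom_on B Ht \<tau>" "hom_on B H \<rho>" and "hilbert_subspace H"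
    by (auto simp: Phi_def)
  have "Bphi B Ht \<tau> \<subseteq> Bphi B H \<rho>"
    using Bphi_subset_if_dilates[OF assms(2) hom(2) \<open>hilbert_subspace H\<close>] .
  moreover have "\<not> Bphi B Ht \<tau> \<subset> Bphi B H \<rho>"
    using assms(4,5) by (auto simp: maximal_in_def)
  ultimately have "b \<in> Bphi B Ht \<tau>"
    using assms(6) by blast
  then show ?thesis
    using dilates_invariant_if_in_Bphi[OF assms(1,2) hom \<open>hilbert_subspace H\<close> _ assms(7)] by blast
qed

theorem proposition7:
  fixes H0 :: "'a::chilbert set" and B :: "('a \<Rightarrow> 'a) set"
    and Ht H :: "'k::chilbert set" and \<tau> \<rho> :: "('a \<Rightarrow> 'a) \<Rightarrow> ('k \<Rightarrow> 'k)"
  assumes "op_algebra H0 B"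
    and "dilates B Ht \<tau> H \<rho>"
  shows "(maximal_in (Phi H0 B) B Ht \<tau> \<and> (H, \<rho>) \<in> Phi H0 B
            \<longrightarrow> (\<forall>b\<in>Bphi B H \<rho>. \<forall>x\<in>H. \<tau> b x \<in> H))
       \<and> (\<forall>r. maximal_in (Phi_r r H0 B) B Ht \<tau> \<and> (H, \<rho>) \<in> Phi_r r H0 B
            \<longrightarrow> (\<forall>b\<in>Bphi B H \<rho>. \<forall>x\<in>H. \<tau> b x \<in> H))"
proof -
  have "Phi_r r H0 B \<subseteq> Phi H0 B" for r
    by (auto simp: Phi_r_def)
  then show ?thesis
    using maximal_in_dilates_invariant[OF assms] by blast
qed

end
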